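(* Let $\gamma > \sqrt{2}$ and let $I$ be a $\gamma$-stable instance of the Euclidean Steiner tree problem with optimal Steiner tree $\mathrm{OPT}$. Then every Steiner point that is a vertex of $\mathrm{OPT}$ has degree in $\mathrm{OPT}$ at most $\frac{-2}{2 - \gamma^2}$.
   Context: An instance of the Euclidean Steiner tree problem consists of a finite set $V \subset \mathbb{R}^d$, a set $T \subseteq V$ of terminals, and the complete graph on $V$ with edge weights $w_{uv} = \|u - v\|$. Points of $V \setminus T$ are Steiner points. A Steiner tree is a tree in this complete graph whose vertex set contains all of $T$; its weight is the sum of its edge weights. For $\gamma > 1$, the instance is $\gamma$-stable if it has a minimum-weight Steiner tree $\mathrm{OPT}$ such that for every $w' : V \times V \to \mathbb{R}_{\ge 0}$ with $w_{uv} \le w'_{uv} \le \gamma w_{uv}$ for all $u,v$, every minimum-weight Steiner tree with respect to $w'$ equals $\mathrm{OPT}$ (the $w'$ need not be Euclidean). *)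

theory Defs
  imports "HOL-Analysis.Analysis"
begin

definition complete_edges :: "'a set \<Rightarrow> 'a set set" where
  "complete_edges S = {{u, v} | u v. u \<in> S \<and> v \<in> S \<and> u \<noteq> v}"

definition adj :: "'a set set \<Rightarrow> ('a \<times> 'a) set" where
  "adj E = {(x, y). {x, y} \<in> E}"

definition is_tree :: "'a set \<Rightarrow> 'a set set \<Rightarrow> bool" where
  "is_tree S E \<longleftrightarrow> finite S \<and> S \<noteq> {} \<and> E \<subseteq> complete_edges S \<and>
     (\<forall>u\<in>S. \<forall>v\<in>S. (u, v) \<in> (adj E)\<^sup>*) \<and> card E = card S - 1"

definition steiner_tree :: "'a set \<Rightarrow> 'a set \<Rightarrow> 'a set \<times> 'a set set \<Rightarrow> bool" where
  "steiner_tree V T X \<longleftrightarrow> T \<subseteq> fst X \<and> fst X \<subseteq> V \<and> is_tree (fst X) (snd X)"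

definition tree_weight :: "('a set \<Rightarrow> real) \<Rightarrow> 'a set \<times> 'a set set \<Rightarrow> real" where
  "tree_weight c X = (\<Sum>e\<in>snd X. c e)"

definition min_steiner ::
  "'a set \<Rightarrow> 'a set \<Rightarrow> ('a set \<Rightarrow> real) \<Rightarrow> 'a set \<times> 'a set set \<Rightarrow> bool" where
  "min_steiner V T c X \<longleftrightarrow> steiner_tree V T X \<and>
     (\<forall>Y. steiner_tree V T Y \<longrightarrow> tree_weight c X \<le> tree_weight c Y)"

definition edge_len :: "'a::euclidean_space set \<Rightarrow> real" where
  "edge_len e = (SOME d. \<exists>u v. e = {u, v} \<and> d = dist u v)"

definition gamma_stable ::
  "real \<Rightarrow> 'a::euclidean_space set \<Rightarrow> 'a set \<Rightarrow> 'a set \<times> 'a set set \<Rightarrow> bool" where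
  "gamma_stable \<gamma> V T OPT \<longleftrightarrow> min_steiner V T edge_len OPT \<and>
     (\<forall>c. (\<forall>e\<in>complete_edges V. edge_len e \<le> c e \<and> c e \<le> \<gamma> * edge_len e) \<longrightarrow>
          (\<forall>Y. min_steiner V T c Y \<longrightarrow> Y = OPT))"

definition tree_degree :: "'a set set \<Rightarrow> 'a \<Rightarrow> nat" where
  "tree_degree E v = card {e \<in> E. v \<in> e}"

end

theory Submission
  imports Defs
begin

text \<open>Let \<open>v\<close> be a Steiner point of OPT with a nonempty set \<open>N\<close> of neighbours. Deleting \<open>v\<close>
  and joining the other neighbours to one of them, \<open>m\<close>, gives another Steiner tree. Stretching
  the edges at \<open>v\<close> by the factor \<open>\<gamma>\<close> is an admissible perturbation, under which OPT must stay
  strictly cheapest; hence \<open>\<gamma> \<Sum>u\<in>N. |u - v| < \<Sum>u\<in>N. |m - u|\<close>.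
  But some \<open>m \<in> N\<close> satisfies \<open>\<Sum>u\<in>N. |m - u| \<le> sqrt 2 \<Sum>u\<in>N. |u - v|\<close>. Indeed, with
  \<open>a u = |u - v|\<close> and \<open>x u = (u - v) / a u\<close>, expanding the squares gives
  \<open>\<Sum>m\<in>N. \<Sum>u\<in>N. |m - u|\<^sup>2 / (a m a u) = 2 (\<Sum> a) (\<Sum> 1 / a) - 2 |\<Sum> x|\<^sup>2\<close>; so for some \<open>m\<close>
  we have \<open>\<Sum>u\<in>N. |m - u|\<^sup>2 / a u \<le> 2 \<Sum> a\<close>, and Cauchy--Schwarz finishes.
  Thus for \<open>\<gamma> > sqrt 2\<close> every Steiner point of OPT has degree 0, which implies the bound.\<close>

section \<open>Trees in the complete graph\<close>

lemma edge_len_doubleton [simp]: "edge_len {x, y} = dist x y"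
proof -
  have "\<exists>u w. {x, y} = {u, w} \<and> edge_len {x, y} = dist u w"
    unfolding edge_len_def
    by (rule someI_ex[of "\<lambda>d. \<exists>u w. {x, y} = {u, w} \<and> d = dist u w"]) blast
  then show ?thesis
    by (auto simp: doubleton_eq_iff dist_commute)
qed

lemma edge_len_nonneg: "e \<in> complete_edges S \<Longrightarrow> 0 \<le> edge_len e"
  by (auto simp: complete_edges_def)

lemma finite_complete_edges: "finite S \<Longrightarrow> finite (complete_edges S)"
  by (rule finite_subset[of _ "Pow S"]) (auto simp: complete_edges_def)

lemma complete_edges_mono: "A \<subseteq> B \<Longrightarrow> complete_edges A \<subseteq> complete_edges B"
  by (auto simp: complete_edges_def)

lemma sym_adj: "sym (adj F)"
  by (auto simp: adj_def insert_commute intro: symI)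

text \<open>Every vertex other than the root \<open>r\<close> is mapped injectively to the first edge of a
  shortest path to \<open>r\<close>.\<close>
lemma card_le_card_edges_Suc_if_connected:
  assumes "finite S" "finite F" "r \<in> S" "\<forall>x\<in>S. (x, r) \<in> (adj F)\<^sup>*"
  shows "card S \<le> card F + 1"
proof -
  define d where "d x = (LEAST n. (x, r) \<in> adj F ^^ n)" for x
  have "\<forall>x\<in>S - {r}. \<exists>y. (x, y) \<in> adj F \<and> d y < d x"
  proof
    fix x assume "x \<in> S - {r}"
    with assms(4) have "(x, r) \<in> (adj F)\<^sup>*"
      by blast
    then obtain n where "(x, r) \<in> adj F ^^ n"
      by (auto simp: rtrancl_power)
    then have dx: "(x, r) \<in> adj F ^^ d x"
      unfolding d_def by (rule LeastI)
    with \<open>x \<in> S - {r}\<close> obtain n' where n': "d x = Suc n'"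
      by (cases "d x") auto
    with dx have "(x, r) \<in> adj F ^^ Suc n'"
      by (simp only:)
    then obtain y where "(x, y) \<in> adj F" "(y, r) \<in> adj F ^^ n'"
      by (blast dest: relpow_Suc_D2)
    moreover from this(2) have "d y \<le> n'"
      unfolding d_def by (rule Least_le)
    ultimately show "\<exists>y. (x, y) \<in> adj F \<and> d y < d x"
      using n' by auto
  qed
  then obtain p where p: "\<forall>x\<in>S - {r}. (x, p x) \<in> adj F \<and> d (p x) < d x"
    by (rule bchoice[THEN exE])
  have "inj_on (\<lambda>x. {x, p x}) (S - {r})"
  proof (rule inj_onI)
    fix x y assume x: "x \<in> S - {r}" and y: "y \<in> S - {r}" and "{x, p x} = {y, p y}"
    then have "x = y \<or> (x = p y \<and> y = p x)"
      by (auto simp: doubleton_eq_iff)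
    moreover have "d (p x) < d x" "d (p y) < d y"
      using p x y by auto
    ultimately show "x = y"
      by (metis less_asym)
  qed
  moreover have "(\<lambda>x. {x, p x}) ` (S - {r}) \<subseteq> F"
    using p by (auto simp: adj_def)
  ultimately have "card (S - {r}) \<le> card F"
    using assms(2) by (rule card_inj_on_le)
  then show ?thesis
    using assms(1,3) by simp
qed

section \<open>Splicing out a vertex\<close>

definition neighbours :: "'a set set \<Rightarrow> 'a \<Rightarrow> 'a set" where
  "neighbours E v = {u. {v, u} \<in> E}"

definition splice_out :: "'a set set \<Rightarrow> 'a \<Rightarrow> 'a \<Rightarrow> 'a set set" where
  "splice_out E v m = {e \<in> E. v \<notin> e} \<union> (\<lambda>u. {m, u}) ` (neighbours E v - {m})"

lemma neighbours_subset:
  "E \<subseteq> complete_edges S \<Longrightarrow> neighbours E v \<subseteq> S - {v}"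
  by (auto simp: neighbours_def complete_edges_def doubleton_eq_iff)

lemma edges_at_eq_image_neighbours:
  assumes "E \<subseteq> complete_edges S"
  shows "{e \<in> E. v \<in> e} = (\<lambda>u. {v, u}) ` neighbours E v"
proof -
  have "e \<in> (\<lambda>u. {v, u}) ` neighbours E v" if "e \<in> E" "v \<in> e" for e
  proof -
    from assms that(1) have "e \<in> complete_edges S"
      by blast
    then obtain x y where "e = {x, y}"
      by (auto simp: complete_edges_def)
    with that show ?thesis
      by (auto simp: neighbours_def insert_commute)
  qed
  then show ?thesis
    by (auto simp: neighbours_def)
qed

lemma inj_on_doubleton: "inj_on (\<lambda>u. {v, u}) A"
  by (auto simp: inj_on_def doubleton_eq_iff)

lemma finite_neighbours:
  assumes "finite E"
  shows "finite (neighbours E v)"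
proof -
  have "(\<lambda>u. {v, u}) ` neighbours E v \<subseteq> E"
    by (auto simp: neighbours_def)
  then have "finite ((\<lambda>u. {v, u}) ` neighbours E v)"
    using assms by (rule finite_subset)
  then show ?thesis
    using inj_on_doubleton by (rule finite_imageD)
qed

lemma card_neighbours:
  "E \<subseteq> complete_edges S \<Longrightarrow> card (neighbours E v) = tree_degree E v"
  unfolding tree_degree_def
  by (simp add: edges_at_eq_image_neighbours card_image inj_on_doubleton)

lemma sum_edges_at:
  "E \<subseteq> complete_edges S \<Longrightarrow> (\<Sum>e\<in>{e \<in> E. v \<in> e}. f e) = (\<Sum>u\<in>neighbours E v. f {v, u})"
  by (simp add: edges_at_eq_image_neighbours sum.reindex inj_on_doubleton)

lemma splice_out_subset_complete_edges:
  assumes "E \<subseteq> complete_edges S" "m \<in> neighbours E v"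
  shows "splice_out E v m \<subseteq> complete_edges (S - {v})"
proof
  fix e assume "e \<in> splice_out E v m"
  then consider "e \<in> E" "v \<notin> e" | u where "u \<in> neighbours E v - {m}" "e = {m, u}"
    by (auto simp: splice_out_def)
  then show "e \<in> complete_edges (S - {v})"
  proof cases
    case 1
    then obtain x y where "e = {x, y}" "x \<in> S" "y \<in> S" "x \<noteq> y"
      using assms(1) unfolding complete_edges_def by blast
    with 1 show ?thesis
      unfolding complete_edges_def by blast
  next
    case 2
    with assms(2) neighbours_subset[OF assms(1), of v] show ?thesis
      unfolding complete_edges_def by blast
  qed
qed

lemma splice_out_reachable:
  assumes "m \<in> neighbours E v" "(m, z) \<in> (adj E)\<^sup>*" "z \<noteq> v"
  shows "(m, z) \<in> (adj (splice_out E v m))\<^sup>*"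
proof -
  let ?E' = "splice_out E v m"
  have "z = v \<or> (m, z) \<in> (adj ?E')\<^sup>*"
    using assms(2)
  proof (induction rule: rtrancl_induct)
    case (step y z)
    then have yz: "{y, z} \<in> E"
      by (simp add: adj_def)
    consider "z = v" | "y = v" "z \<noteq> v" | "y \<noteq> v" "z \<noteq> v"
      by blast
    then show ?case
    proof cases
      case 2
      with yz have "z \<in> neighbours E v"
        by (simp add: neighbours_def)
      then have "z = m \<or> {m, z} \<in> ?E'"
        by (auto simp: splice_out_def)
      then show ?thesis
        by (auto simp: adj_def)
    next
      case 3
      with yz have "(y, z) \<in> adj ?E'"
        by (simp add: splice_out_def adj_def)
      with 3 step.IH show ?thesis
        by (meson rtrancl_into_rtrancl)
    qed simp
  qed simp
  with assms(3) show ?thesis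
    by simp
qed

lemma mem_of_mem_neighbours:
  "E \<subseteq> complete_edges S \<Longrightarrow> u \<in> neighbours E v \<Longrightarrow> v \<in> S"
  by (auto simp: neighbours_def complete_edges_def doubleton_eq_iff)

lemma card_splice_out_less:
  assumes "E \<subseteq> complete_edges S" "finite E" "m \<in> neighbours E v"
  shows "card (splice_out E v m) < card E"
proof -
  let ?N = "neighbours E v"
  have "finite ?N"
    using assms(2) by (rule finite_neighbours)
  have "card (splice_out E v m) \<le> card {e \<in> E. v \<notin> e} + card ((\<lambda>u. {m, u}) ` (?N - {m}))"
    unfolding splice_out_def by (rule card_Un_le)
  moreover have "card ((\<lambda>u. {m, u}) ` (?N - {m})) \<le> card ?N - 1"
    using card_image_le[of "?N - {m}" "\<lambda>u. {m, u}"] \<open>finite ?N\<close> assms(3) by simp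
  moreover have "card E = card {e \<in> E. v \<in> e} + card {e \<in> E. v \<notin> e}"
    using card_Int_Diff[OF assms(2), of "{e. v \<in> e}"] by (simp add: Int_def set_diff_eq)
  moreover have "card {e \<in> E. v \<in> e} = card ?N"
    using card_neighbours[OF assms(1), of v] by (simp add: tree_degree_def)
  moreover have "card ?N \<ge> 1"
    using \<open>finite ?N\<close> assms(3) by (auto simp: Suc_le_eq card_gt_0_iff)
  ultimately show ?thesis
    by linarith
qed

lemma connected_splice_out:
  assumes conn: "\<forall>x\<in>S. \<forall>y\<in>S. (x, y) \<in> (adj E)\<^sup>*"
    and "m \<in> neighbours E v" "m \<in> S"
  shows "\<forall>x\<in>S - {v}. \<forall>y\<in>S - {v}. (x, y) \<in> (adj (splice_out E v m))\<^sup>*"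
proof -
  let ?E' = "splice_out E v m"
  have from_m: "(m, x) \<in> (adj ?E')\<^sup>*" if "x \<in> S - {v}" for x
  proof (rule splice_out_reachable[OF assms(2)])
    show "(m, x) \<in> (adj E)\<^sup>*"
      using conn assms(3) that by blast
  qed (use that in blast)
  have to_m: "(x, m) \<in> (adj ?E')\<^sup>*" if "x \<in> S - {v}" for x
    using sym_rtrancl[OF sym_adj] from_m[OF that] by (rule symD)
  show ?thesis
    using to_m from_m by (blast intro: rtrancl_trans)
qed

lemma is_tree_splice_out:
  assumes tree: "is_tree S E" and m: "m \<in> neighbours E v"
  shows "is_tree (S - {v}) (splice_out E v m)"
proof -
  let ?E' = "splice_out E v m"
  from tree have fin: "finite S" and sub: "E \<subseteq> complete_edges S"
    and conn: "\<forall>x\<in>S. \<forall>y\<in>S. (x, y) \<in> (adj E)\<^sup>*" and card_E: "card E = card S - 1"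
    by (simp_all add: is_tree_def)
  have finE: "finite E"
    using fin sub finite_complete_edges finite_subset by blast
  have mS: "m \<in> S - {v}"
    using neighbours_subset[OF sub] m by blast
  have vS: "v \<in> S"
    using sub m by (rule mem_of_mem_neighbours)
  have sub': "?E' \<subseteq> complete_edges (S - {v})"
    using sub m by (rule splice_out_subset_complete_edges)
  have conn': "\<forall>x\<in>S - {v}. \<forall>y\<in>S - {v}. (x, y) \<in> (adj ?E')\<^sup>*"
    using conn m mS by (intro connected_splice_out) auto
  have "card ?E' < card (S - {v})"
    using card_splice_out_less[OF sub finE m] card_E vS fin by simp
  moreover have "card (S - {v}) \<le> card ?E' + 1"
  proof (rule card_le_card_edges_Suc_if_connected)
    show "finite ?E'"
      using fin sub' by (meson finite_Diff finite_complete_edges finite_subset)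
  qed (use conn' mS fin in auto)
  ultimately have "card ?E' = card (S - {v}) - 1"
    by linarith
  with fin mS conn' sub' show ?thesis
    unfolding is_tree_def by blast
qed

section \<open>A central neighbour\<close>

lemma sum_sq_dist_div_le:
  fixes N :: "'a::real_inner set"
  assumes "v \<notin> N"
  shows "(\<Sum>m\<in>N. \<Sum>u\<in>N. (dist m u)\<^sup>2 / (dist m v * dist u v))
    \<le> 2 * (\<Sum>u\<in>N. dist u v) * (\<Sum>u\<in>N. 1 / dist u v)"
proof -
  define a where "a u = dist u v" for u
  define x where "x u = (1 / a u) *\<^sub>R (u - v)" for u
  have term_eq: "(dist m u)\<^sup>2 / (a m * a u) = a m / a u + a u / a m - 2 * inner (x m) (x u)"
    if "m \<in> N" "u \<in> N" for m u
  proof -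
    have "a m > 0" "a u > 0" using assms that by (auto simp: a_def)
    moreover have "(dist m u)\<^sup>2 = (a m)\<^sup>2 + (a u)\<^sup>2 - 2 * inner (m - v) (u - v)"
      unfolding a_def dist_norm power2_norm_eq_inner
      by (simp add: inner_diff_left inner_diff_right inner_commute)
    moreover have "inner (x m) (x u) = inner (m - v) (u - v) / (a m * a u)"
      by (simp add: x_def)
    ultimately show ?thesis
      by (simp add: field_simps power2_eq_square)
  qed
  have "(\<Sum>m\<in>N. \<Sum>u\<in>N. (dist m u)\<^sup>2 / (a m * a u))
      = (\<Sum>m\<in>N. \<Sum>u\<in>N. a m / a u + a u / a m - 2 * inner (x m) (x u))"
    by (intro sum.cong refl term_eq)
  also have "\<dots> = (\<Sum>m\<in>N. \<Sum>u\<in>N. a m / a u) + (\<Sum>m\<in>N. \<Sum>u\<in>N. a u / a m)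
        - 2 * inner (\<Sum>m\<in>N. x m) (\<Sum>u\<in>N. x u)"
    by (simp add: sum.distrib sum_subtractf sum_distrib_left inner_sum_left inner_sum_right)
      (subst sum.swap, simp add: inner_commute)
  also have "\<dots> \<le> (\<Sum>m\<in>N. \<Sum>u\<in>N. a m / a u) + (\<Sum>m\<in>N. \<Sum>u\<in>N. a u / a m)"
    by simp
  also have "\<dots> = 2 * (\<Sum>u\<in>N. a u) * (\<Sum>u\<in>N. 1 / a u)"
  proof -
    have "(\<Sum>m\<in>N. \<Sum>u\<in>N. a u / a m) = (\<Sum>u\<in>N. 1 / a u) * (\<Sum>u\<in>N. a u)"
      unfolding sum_product by simp
    moreover have "(\<Sum>m\<in>N. \<Sum>u\<in>N. a m / a u) = (\<Sum>m\<in>N. \<Sum>u\<in>N. a u / a m)"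
      by (rule sum.swap)
    ultimately show ?thesis by (simp add: mult.commute)
  qed
  finally show ?thesis by (simp add: a_def)
qed

lemma exists_sum_sq_dist_div_le:
  fixes N :: "'a::real_inner set"
  assumes "finite N" "N \<noteq> {}" "v \<notin> N"
  shows "\<exists>m\<in>N. (\<Sum>u\<in>N. (dist m u)\<^sup>2 / dist u v) \<le> 2 * (\<Sum>u\<in>N. dist u v)"
proof (rule ccontr)
  assume "\<not> ?thesis"
  then have "(\<Sum>m\<in>N. 2 * (\<Sum>u\<in>N. dist u v) / dist m v)
      < (\<Sum>m\<in>N. (\<Sum>u\<in>N. (dist m u)\<^sup>2 / dist u v) / dist m v)"
    using assms by (intro sum_strict_mono divide_strict_right_mono) auto
  also have "\<dots> = (\<Sum>m\<in>N. \<Sum>u\<in>N. (dist m u)\<^sup>2 / (dist m v * dist u v))"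
    by (simp add: sum_divide_distrib mult.commute)
  also have "\<dots> \<le> 2 * (\<Sum>u\<in>N. dist u v) * (\<Sum>u\<in>N. 1 / dist u v)"
    using assms(3) by (rule sum_sq_dist_div_le)
  finally show False
    by (simp add: sum_distrib_left)
qed

lemma exists_star_centre_le_sqrt2:
  fixes N :: "'a::real_inner set"
  assumes "finite N" "N \<noteq> {}" "v \<notin> N"
  shows "\<exists>m\<in>N. (\<Sum>u\<in>N. dist m u) \<le> sqrt 2 * (\<Sum>u\<in>N. dist u v)"
proof -
  obtain m where "m \<in> N"
    and weighted: "(\<Sum>u\<in>N. (dist m u)\<^sup>2 / dist u v) \<le> 2 * (\<Sum>u\<in>N. dist u v)"
    using exists_sum_sq_dist_div_le[OF assms] by blast
  have "(\<Sum>u\<in>N. dist m u) = (\<Sum>u\<in>N. dist m u / sqrt (dist u v) * sqrt (dist u v))"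
    using assms(3) by (intro sum.cong) auto
  then have "(\<Sum>u\<in>N. dist m u)\<^sup>2 \<le> (\<Sum>u\<in>N. (dist m u)\<^sup>2 / dist u v) * (\<Sum>u\<in>N. dist u v)"
    using Cauchy_Schwarz_ineq_sum[of "\<lambda>u. dist m u / sqrt (dist u v)" "\<lambda>u. sqrt (dist u v)" N]
    by (simp add: power_divide)
  also have "\<dots> \<le> 2 * (\<Sum>u\<in>N. dist u v) * (\<Sum>u\<in>N. dist u v)"
    using weighted by (intro mult_right_mono) (auto intro: sum_nonneg)
  also have "\<dots> = (sqrt 2 * (\<Sum>u\<in>N. dist u v))\<^sup>2"
    by (simp add: power_mult_distrib power2_eq_square)
  finally have "(\<Sum>u\<in>N. dist m u) \<le> sqrt 2 * (\<Sum>u\<in>N. dist u v)"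
    by (rule power2_le_imp_le) (simp add: sum_nonneg)
  with \<open>m \<in> N\<close> show ?thesis ..
qed

section \<open>Steiner points of stable instances\<close>

lemma finite_steiner_trees:
  assumes "finite V"
  shows "finite {Y. steiner_tree V T Y}"
proof (rule finite_subset)
  show "{Y. steiner_tree V T Y} \<subseteq> Pow V \<times> Pow (complete_edges V)"
  proof
    fix Y assume "Y \<in> {Y. steiner_tree V T Y}"
    then have "fst Y \<subseteq> V" "snd Y \<subseteq> complete_edges (fst Y)"
      by (simp_all add: steiner_tree_def is_tree_def)
    then show "Y \<in> Pow V \<times> Pow (complete_edges V)"
      using complete_edges_mono by (cases Y) fastforce
  qed
  show "finite (Pow V \<times> Pow (complete_edges V))"
    using assms finite_complete_edges by blast
qed

lemma min_steiner_exists: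
  assumes "finite V" "steiner_tree V T X"
  shows "\<exists>Y. min_steiner V T c Y"
proof -
  obtain Y where "is_arg_min (tree_weight c) (\<lambda>Y. Y \<in> {Y. steiner_tree V T Y}) Y"
    using ex_is_arg_min_if_finite[OF finite_steiner_trees[OF assms(1)]] assms(2) by blast
  then have "steiner_tree V T Y" "\<forall>Z. steiner_tree V T Z \<longrightarrow> tree_weight c Y \<le> tree_weight c Z"
    by (simp_all add: is_arg_min_linorder)
  then show ?thesis
    unfolding min_steiner_def by blast
qed

lemma gamma_stable_weight_less:
  assumes "finite V" "gamma_stable \<gamma> V T OPT"
    and "\<forall>e\<in>complete_edges V. edge_len e \<le> c e \<and> c e \<le> \<gamma> * edge_len e"
    and "steiner_tree V T Y" "Y \<noteq> OPT"
  shows "tree_weight c OPT < tree_weight c Y"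
proof -
  have unique: "min_steiner V T c Z \<Longrightarrow> Z = OPT" for Z
    using assms(2,3) unfolding gamma_stable_def by blast
  obtain Z where "min_steiner V T c Z"
    using min_steiner_exists[OF assms(1,4)] by blast
  then have "min_steiner V T c OPT"
    using unique by blast
  show ?thesis
  proof (rule ccontr)
    assume "\<not> ?thesis"
    with \<open>min_steiner V T c OPT\<close> assms(4) have "min_steiner V T c Y"
      by (fastforce simp: min_steiner_def)
    with unique assms(5) show False
      by blast
  qed
qed

lemma tree_weight_split_at:
  assumes "E \<subseteq> complete_edges S" "finite E"
  shows "tree_weight c (S, E) = (\<Sum>e\<in>{e \<in> E. v \<notin> e}. c e) + (\<Sum>u\<in>neighbours E v. c {v, u})"
proof -
  have "tree_weight c (S, E) = (\<Sum>e\<in>{e \<in> E. v \<notin> e}. c e) + (\<Sum>e\<in>{e \<in> E. v \<in> e}. c e)"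
    unfolding tree_weight_def using assms(2)
    by (subst sum.union_disjoint[symmetric]) (auto intro: sum.cong)
  then show ?thesis
    using sum_edges_at[OF assms(1)] by simp
qed

lemma tree_weight_splice_out_le:
  assumes "E \<subseteq> complete_edges S" "finite E" "m \<in> neighbours E v"
    and nonneg: "\<forall>e\<in>complete_edges (S - {v}). 0 \<le> c e"
  shows "tree_weight c (S - {v}, splice_out E v m)
    \<le> (\<Sum>e\<in>{e \<in> E. v \<notin> e}. c e) + (\<Sum>u\<in>neighbours E v - {m}. c {m, u})"
proof -
  let ?A = "{e \<in> E. v \<notin> e}" and ?B = "(\<lambda>u. {m, u}) ` (neighbours E v - {m})"
  have sub: "?A \<union> ?B \<subseteq> complete_edges (S - {v})"
    using splice_out_subset_complete_edges[OF assms(1,3)] by (simp add: splice_out_def)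
  have fin: "finite (neighbours E v)"
    using assms(2) by (rule finite_neighbours)
  have "tree_weight c (S - {v}, splice_out E v m) = sum c ?A + sum c ?B - sum c (?A \<inter> ?B)"
    unfolding tree_weight_def splice_out_def using assms(2) fin by (simp add: sum_Un)
  also have "\<dots> \<le> sum c ?A + sum c ?B"
    using nonneg sub by (auto intro!: sum_nonneg)
  also have "sum c ?B \<le> (\<Sum>u\<in>neighbours E v - {m}. c {m, u})"
    using nonneg sub fin by (intro sum_image_le[unfolded o_def]) auto
  finally show ?thesis
    by simp
qed

definition stretch_at :: "real \<Rightarrow> 'a::euclidean_space \<Rightarrow> 'a set \<Rightarrow> real" where
  "stretch_at \<gamma> v e = (if v \<in> e then \<gamma> * edge_len e else edge_len e)"

lemma stretch_at_admissible:
  assumes "\<gamma> \<ge> 1"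
  shows "\<forall>e\<in>complete_edges V. edge_len e \<le> stretch_at \<gamma> v e \<and> stretch_at \<gamma> v e \<le> \<gamma> * edge_len e"
  using mult_right_mono[OF assms edge_len_nonneg, of _ V] by (simp add: stretch_at_def)

lemma tree_weight_stretch_at_splice_out:
  assumes tree: "is_tree S E" and m: "m \<in> neighbours E v"
  shows "tree_weight (stretch_at \<gamma> v) (S - {v}, splice_out E v m) + \<gamma> * (\<Sum>u\<in>neighbours E v. dist u v)
    \<le> tree_weight (stretch_at \<gamma> v) (S, E) + (\<Sum>u\<in>neighbours E v. dist m u)"
proof -
  let ?c = "stretch_at \<gamma> v" and ?N = "neighbours E v"
  from tree have sub: "E \<subseteq> complete_edges S" and finE: "finite E"
    by (auto simp: is_tree_def intro: finite_subset finite_complete_edges)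
  have "v \<notin> ?N" "finite ?N"
    using neighbours_subset[OF sub, of v] finite_neighbours[OF finE] by auto
  have "tree_weight ?c (S - {v}, splice_out E v m)
      \<le> (\<Sum>e\<in>{e \<in> E. v \<notin> e}. ?c e) + (\<Sum>u\<in>?N - {m}. ?c {m, u})"
    by (intro tree_weight_splice_out_le[OF sub finE m])
      (auto simp: stretch_at_def complete_edges_def)
  moreover have "(\<Sum>u\<in>?N - {m}. ?c {m, u}) = (\<Sum>u\<in>?N - {m}. dist m u)"
    using \<open>v \<notin> ?N\<close> m by (intro sum.cong) (auto simp: stretch_at_def)
  moreover have "(\<Sum>u\<in>?N - {m}. dist m u) \<le> (\<Sum>u\<in>?N. dist m u)"
    using \<open>finite ?N\<close> by (intro sum_mono2) auto
  moreover have "tree_weight ?c (S, E)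
      = (\<Sum>e\<in>{e \<in> E. v \<notin> e}. ?c e) + \<gamma> * (\<Sum>u\<in>?N. dist u v)"
    using tree_weight_split_at[OF sub finE, of ?c v]
    by (simp add: stretch_at_def sum_distrib_left dist_commute)
  ultimately show ?thesis
    by linarith
qed

lemma gamma_stable_tree_degree_eq_0:
  assumes "finite V" "\<gamma> > sqrt 2" "gamma_stable \<gamma> V T (S, E)" "v \<notin> T"
  shows "tree_degree E v = 0"
proof (rule ccontr)
  assume "tree_degree E v \<noteq> 0"
  let ?N = "neighbours E v" and ?c = "stretch_at \<gamma> v"
  from assms(3) have st: "steiner_tree V T (S, E)"
    by (simp add: gamma_stable_def min_steiner_def)
  then have tree: "is_tree S E" and sub: "E \<subseteq> complete_edges S"
    by (simp_all add: steiner_tree_def is_tree_def)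
  then have "finite ?N"
    by (meson finite_complete_edges finite_neighbours finite_subset is_tree_def)
  moreover have "?N \<noteq> {}"
    using card_neighbours[OF sub, of v] \<open>tree_degree E v \<noteq> 0\<close> by auto
  moreover have "v \<notin> ?N"
    using neighbours_subset[OF sub, of v] by blast
  ultimately obtain m where m: "m \<in> ?N"
    and centre: "(\<Sum>u\<in>?N. dist m u) \<le> sqrt 2 * (\<Sum>u\<in>?N. dist u v)"
    using exists_star_centre_le_sqrt2 by blast
  have "(S - {v}, splice_out E v m) \<noteq> (S, E)"
    using mem_of_mem_neighbours[OF sub m] by auto
  moreover have "steiner_tree V T (S - {v}, splice_out E v m)"
    using st assms(4) is_tree_splice_out[OF tree m] by (auto simp: steiner_tree_def)
  moreover have "\<gamma> \<ge> 1"
    using assms(2) real_sqrt_ge_one[of 2] by linarith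
  ultimately have "tree_weight ?c (S, E) < tree_weight ?c (S - {v}, splice_out E v m)"
    using gamma_stable_weight_less[OF assms(1,3) stretch_at_admissible] by blast
  then have "\<gamma> * (\<Sum>u\<in>?N. dist u v) < sqrt 2 * (\<Sum>u\<in>?N. dist u v)"
    using tree_weight_stretch_at_splice_out[OF tree m, of \<gamma>] centre by linarith
  moreover have "(\<Sum>u\<in>?N. dist u v) > 0"
    using \<open>finite ?N\<close> \<open>?N \<noteq> {}\<close> \<open>v \<notin> ?N\<close> by (intro sum_pos) auto
  ultimately show False
    using assms(2) by (simp add: mult_less_cancel_right)
qed

theorem mainTheorem12:
  fixes V T :: "'a::euclidean_space set" and S :: "'a set" and E :: "'a set set"
    and \<gamma> :: real
  assumes "finite V" and "T \<subseteq> V"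
    and "\<gamma> > sqrt 2"
    and "gamma_stable \<gamma> V T (S, E)"
    and "v \<in> S" and "v \<in> V - T"
  shows "real (tree_degree E v) \<le> -2 / (2 - \<gamma>^2)"
proof -
  have "tree_degree E v = 0"
    using assms(1,3,4,6) by (intro gamma_stable_tree_degree_eq_0) auto
  moreover have "sqrt 2 ^ 2 < \<gamma> ^ 2"
    using assms(3) by (intro power_strict_mono) auto
  ultimately show ?thesis
    by (simp add: divide_neg_neg less_imp_le)
qed

end
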